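(* Let $0<\mu<\nu<1/2$. For $t,\tau\in(0,1)$, $\xi\in\mathbb R$, let $D_4=D_4(\tau,\xi)=\{(\xi_1,\xi_2,\xi_3)\in\mathbb R^3:\ \xi_1+\xi_2+\xi_3=\xi,\ |\xi_1|+|\xi_2|+|\xi_3|<\tau^{-1/3}\}$. Then for all $f,g\in L^\infty(\mathbb R)$ and $h$ with $\langle\xi\rangle^\nu h\in L^\infty$, $$\Big\|\xi\int_{D_4}e^{it\Phi}f(\xi_1)g(\xi_2)h(\xi_3)\,d\xi_1d\xi_2\Big\|_{L^\infty_\mu}\lesssim\tau^{-1+\frac{\nu-\mu}{3}}\|f\|_{L^\infty}\|g\|_{L^\infty}\|h\|_{L^\infty_\nu}.$$
   Context: $\Phi=\xi^3-\xi_1^3-\xi_2^3-\xi_3^3$ with $\xi_3=\xi-\xi_1-\xi_2$ (the integral is over the plane $\xi_1+\xi_2+\xi_3=\xi$ parametrized by $(\xi_1,\xi_2)$). $\langle\xi\rangle=(1+\xi^2)^{1/2}$, $\|v\|_{L^\infty_\mu}=\|\langle\xi\rangle^\mu v(\xi)\|_{L^\infty_\xi}$, the $L^\infty_\mu$ norm on the left being taken in $\xi$. Implicit constants depend only on $\mu,\nu$. *)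

theory Defs
  imports "HOL-Analysis.Analysis"
begin

definition japanese :: "real \<Rightarrow> real" where
  "japanese x = sqrt (1 + x\<^sup>2)"

definition Phi :: "real \<Rightarrow> real \<Rightarrow> real \<Rightarrow> real" where
  "Phi \<xi> \<xi>1 \<xi>2 = \<xi>^3 - \<xi>1^3 - \<xi>2^3 - (\<xi> - \<xi>1 - \<xi>2)^3"

text \<open>The region \<open>D_4(\<tau>,\<xi>)\<close>, parametrised by \<open>(\<xi>1,\<xi>2)\<close> on the plane \<open>\<xi>1+\<xi>2+\<xi>3=\<xi>\<close>.\<close>
definition D4 :: "real \<Rightarrow> real \<Rightarrow> (real \<times> real) set" where
  "D4 \<tau> \<xi> = {(\<xi>1, \<xi>2). \<bar>\<xi>1\<bar> + \<bar>\<xi>2\<bar> + \<bar>\<xi> - \<xi>1 - \<xi>2\<bar> < \<tau> powr (-1/3)}"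

text \<open>The trilinear integral \<open>\<integral>_{D_4} e^{it\<Phi>} f(\<xi>1) g(\<xi>2) h(\<xi>3) d\<xi>1 d\<xi>2\<close>
  (Lebesgue measure on the \<open>(\<xi>1,\<xi>2)\<close>-plane, via the gauge integral, which agrees with
  the Lebesgue integral for the bounded integrands on bounded sets arising here).\<close>
definition trilin :: "real \<Rightarrow> real \<Rightarrow> (real \<Rightarrow> complex) \<Rightarrow> (real \<Rightarrow> complex)
    \<Rightarrow> (real \<Rightarrow> complex) \<Rightarrow> real \<Rightarrow> complex" where
  "trilin t \<tau> f g h \<xi> = integral (D4 \<tau> \<xi>)
     (\<lambda>(\<xi>1, \<xi>2). cis (t * Phi \<xi> \<xi>1 \<xi>2) * f \<xi>1 * g \<xi>2 * h (\<xi> - \<xi>1 - \<xi>2))"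

end

theory Submission
  imports Defs
begin

(* On D4 all frequencies are bounded by N = tau powr (-1/3). The weight |xi| <xi>^mu
   contributes O(N^(1+mu)), and N^(3+mu-nu) = tau^(-1+(nu-mu)/3). *)

lemma japanese_powr: "japanese x powr r = (1 + x\<^sup>2) powr (r / 2)"
  by (simp add: japanese_def powr_half_sqrt[symmetric] powr_powr add_pos_nonneg)

lemma japanese_pos [simp]: "0 < japanese x"
  by (simp add: japanese_def add_pos_nonneg)

lemma japanese_neq_0 [simp]: "japanese x \<noteq> 0"
  using japanese_pos[of x] by linarith

lemma abs_le_japanese: "\<bar>x\<bar> \<le> japanese x"
  unfolding japanese_def by (simp add: real_le_rsqrt)

lemma japanese_le: "japanese x \<le> 1 + \<bar>x\<bar>"
  unfolding japanese_def by (rule real_le_lsqrt) (auto simp: power2_eq_square algebra_simps)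

lemma continuous_on_japanese [continuous_intros]:
  "continuous_on S f \<Longrightarrow> continuous_on S (\<lambda>x. japanese (f x))"
  unfolding japanese_def by (intro continuous_intros)

lemma has_real_derivative_times_japanese_powr:
  "((\<lambda>x. x * japanese x powr r) has_real_derivative
     japanese x powr r + r * x\<^sup>2 * japanese x powr (r - 2)) (at x)"
proof -
  have pos: "0 < 1 + x\<^sup>2" by (simp add: add_pos_nonneg)
  have "((\<lambda>x. x * (1 + x\<^sup>2) powr (r / 2)) has_real_derivative
      (1 + x\<^sup>2) powr (r / 2) + r * x\<^sup>2 * (1 + x\<^sup>2) powr (r / 2 - 1)) (at x)"
    by (rule derivative_eq_intros refl | simp add: pos)+
      (simp add: power2_eq_square algebra_simps)
  then show ?thesis by (simp add: japanese_powr diff_divide_distrib)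
qed

lemma abs_times_japanese_powr_le:
  assumes "0 \<le> \<nu>"
  shows "\<bar>x * japanese x powr (-\<nu>)\<bar> \<le> \<bar>x\<bar> powr (1 - \<nu>)"
proof (cases "x = 0")
  case False
  then have "japanese x powr (-\<nu>) \<le> \<bar>x\<bar> powr (-\<nu>)"
    using assms abs_le_japanese by (intro powr_mono2') auto
  then have "\<bar>x\<bar> * japanese x powr (-\<nu>) \<le> \<bar>x\<bar> * \<bar>x\<bar> powr (-\<nu>)"
    by (simp add: mult_left_mono)
  also have "\<dots> = \<bar>x\<bar> powr (1 - \<nu>)"
    using False by (simp add: powr_diff powr_minus divide_inverse)
  finally show ?thesis by (simp add: abs_mult)
qed simp

lemma integral_japanese_powr_le:
  fixes a b c \<nu> :: real
  assumes "0 \<le> \<nu>" "\<nu> < 1" "a \<le> b"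
  shows "integral {a..b} (\<lambda>y. japanese (c - y) powr (-\<nu>))
           \<le> (\<bar>c - a\<bar> powr (1 - \<nu>) + \<bar>c - b\<bar> powr (1 - \<nu>)) / (1 - \<nu>)"
proof -
  define P where "P y = - ((c - y) * japanese (c - y) powr (-\<nu>)) / (1 - \<nu>)" for y
  define p where "p y = (japanese (c - y) powr (-\<nu>)
      - \<nu> * (c - y)\<^sup>2 * japanese (c - y) powr (-\<nu> - 2)) / (1 - \<nu>)" for y
  have "(P has_real_derivative p y) (at y)" for y
  proof -
    have "((\<lambda>y. (c - y) * japanese (c - y) powr (-\<nu>)) has_real_derivative
        (japanese (c - y) powr (-\<nu>) + - \<nu> * (c - y)\<^sup>2 * japanese (c - y) powr (-\<nu> - 2)) * (-1)) (at y)"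
      by (rule DERIV_chain2[OF has_real_derivative_times_japanese_powr])
        (rule derivative_eq_intros refl | simp)+
    from DERIV_cdivide[OF DERIV_minus[OF this], of "1 - \<nu>"] show ?thesis
      unfolding P_def p_def by (simp add: algebra_simps)
  qed
  then have P_integral: "(p has_integral P b - P a) {a..b}"
    using assms(3) by (intro fundamental_theorem_of_calculus)
      (auto intro: has_field_derivative_at_within
        simp: has_real_derivative_iff_has_vector_derivative[symmetric])
  have below_p: "japanese (c - y) powr (-\<nu>) \<le> p y" for y
  proof -
    have "(c - y)\<^sup>2 * japanese (c - y) powr (-\<nu> - 2)
        \<le> japanese (c - y) powr 2 * japanese (c - y) powr (-\<nu> - 2)"
      by (intro mult_right_mono) (simp_all add: japanese_powr add_pos_nonneg)
    also have "\<dots> = japanese (c - y) powr (-\<nu>)"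
      by (simp add: powr_add[symmetric])
    finally show ?thesis
      unfolding p_def using assms by (simp add: field_simps mult_left_mono)
  qed
  have "integral {a..b} (\<lambda>y. japanese (c - y) powr (-\<nu>)) \<le> integral {a..b} p"
    using below_p
    by (intro integral_le integrable_continuous_interval has_integral_integrable[OF P_integral]
        continuous_intros) auto
  also have "\<dots> = P b - P a"
    using P_integral by (rule integral_unique)
  also have "\<dots> \<le> (\<bar>c - a\<bar> powr (1 - \<nu>) + \<bar>c - b\<bar> powr (1 - \<nu>)) / (1 - \<nu>)"
    unfolding P_def using assms abs_times_japanese_powr_le[OF assms(1), of "c - a"]
      abs_times_japanese_powr_le[OF assms(1), of "c - b"]
    by (simp add: diff_divide_distrib[symmetric] divide_right_mono abs_le_iff)
  finally show ?thesis .
qed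

lemma integral_square_japanese_powr_le:
  fixes \<nu> N \<xi> :: real
  assumes "0 \<le> \<nu>" "\<nu> < 1" "0 < N" "\<bar>\<xi>\<bar> \<le> N"
  shows "integral (cbox (-N, -N) (N, N)) (\<lambda>p. japanese (\<xi> - fst p - snd p) powr (-\<nu>))
           \<le> 4 * 3 powr (1 - \<nu>) / (1 - \<nu>) * N powr (2 - \<nu>)"
proof -
  define B where "B = 2 * (3 * N) powr (1 - \<nu>) / (1 - \<nu>)"
  have cont: "continuous_on (cbox (-N, -N) (N, N)) (\<lambda>p. japanese (\<xi> - fst p - snd p) powr (-\<nu>))"
    by (intro continuous_intros) auto
  have inner: "integral {-N..N} (\<lambda>y. japanese (\<xi> - x - y) powr (-\<nu>)) \<le> B"
    if "x \<in> {-N..N}" for x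
  proof -
    have "integral {-N..N} (\<lambda>y. japanese ((\<xi> - x) - y) powr (-\<nu>))
        \<le> (\<bar>(\<xi> - x) - (-N)\<bar> powr (1 - \<nu>) + \<bar>(\<xi> - x) - N\<bar> powr (1 - \<nu>)) / (1 - \<nu>)"
      using assms by (intro integral_japanese_powr_le) auto
    also have "\<dots> \<le> ((3 * N) powr (1 - \<nu>) + (3 * N) powr (1 - \<nu>)) / (1 - \<nu>)"
      using assms that by (intro divide_right_mono add_mono powr_mono2) auto
    finally show ?thesis unfolding B_def by simp
  qed
  have "integral (cbox (-N, -N) (N, N)) (\<lambda>p. japanese (\<xi> - fst p - snd p) powr (-\<nu>))
      = integral {-N..N} (\<lambda>x. integral {-N..N} (\<lambda>y. japanese (\<xi> - x - y) powr (-\<nu>)))"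
    using integral_prod_continuous[OF cont] by simp
  also have "\<dots> \<le> integral {-N..N} (\<lambda>x. B)"
    using integral_integrable_2dim[OF cont] inner by (intro integral_le) auto
  also have "\<dots> = 4 * 3 powr (1 - \<nu>) / (1 - \<nu>) * N powr (2 - \<nu>)"
    using assms by (simp add: B_def powr_mult powr_diff power2_eq_square mult_ac)
  finally show ?thesis .
qed

lemma negligible_Times:
  fixes A :: "'a::euclidean_space set" and B :: "'b::euclidean_space set"
  assumes "negligible A \<or> negligible B"
  shows "negligible (A \<times> B)"
proof -
  have negligible_if_lborel_null: "negligible C"
    if "C \<subseteq> C'" "C' \<in> null_sets (lborel \<Otimes>\<^sub>M lborel)"
    for C C' :: "('a \<times> 'b) set"
    using that unfolding lborel_prod negligible_iff_null_sets
    by (metis null_sets_completionI null_sets_completion_subset)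
  from assms show ?thesis
  proof
    assume "negligible A"
    then obtain A' where "A' \<in> null_sets lborel" "A \<subseteq> A'"
      unfolding negligible_iff_null_sets null_sets_completion_iff2 by blast
    then show ?thesis
      by (intro negligible_if_lborel_null[of _ "A' \<times> UNIV"] lborel.times_in_null_sets1) auto
  next
    assume "negligible B"
    then obtain B' where "B' \<in> null_sets lborel" "B \<subseteq> B'"
      unfolding negligible_iff_null_sets null_sets_completion_iff2 by blast
    then show ?thesis
      by (intro negligible_if_lborel_null[of _ "UNIV \<times> B'"] lborel.times_in_null_sets2) auto
  qed
qed

lemma negligible_preimage_diff_fst_snd:
  fixes N :: "real set"
  assumes "negligible N"
  shows "negligible {p. c - fst p - snd p \<in> N}"
proof -
  define \<phi> :: "real \<times> real \<Rightarrow> real \<times> real" where "\<phi> p = (c - fst p - snd p, snd p)" for p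
  have "\<phi> differentiable_on N \<times> UNIV"
    unfolding \<phi>_def differentiable_on_def
    by (intro ballI derivative_intros bounded_linear_imp_differentiable
        bounded_linear_fst bounded_linear_snd)
  then have "negligible (\<phi> ` (N \<times> UNIV))"
    using assms by (intro negligible_differentiable_image_negligible negligible_Times) auto
  moreover have "\<phi> ` (N \<times> UNIV) = {p. c - fst p - snd p \<in> N}"
    unfolding \<phi>_def by (force simp: image_iff)
  ultimately show ?thesis by simp
qed

(* F need not be integrable: otherwise its gauge integral is 0. This is why the theorem needs
   no measurability of f, g, h. *)
lemma integral_norm_bound_integral_negligible:
  fixes F :: "'n::euclidean_space \<Rightarrow> 'a::banach"
  assumes "A \<subseteq> B" "negligible S" "g integrable_on B" "\<And>x. x \<in> B \<Longrightarrow> 0 \<le> g x"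
    and F_le: "\<And>x. x \<in> A - S \<Longrightarrow> norm (F x) \<le> g x"
  shows "norm (integral A F) \<le> integral B g"
proof (cases "F integrable_on A")
  case True
  define F0 where "F0 x = (if x \<in> S then 0 else F x)" for x
  have "integral A F = integral A F0"
    unfolding F0_def using assms(2) by (intro integral_spike) auto
  also have "\<dots> = integral B (\<lambda>x. if x \<in> A then F0 x else 0)"
    using assms(1) by (simp add: integral_restrict_Int Int_absorb2)
  also have "norm \<dots> \<le> integral B g"
  proof (rule integral_norm_bound_integral)
    have "F0 integrable_on A"
      unfolding F0_def using True assms(2) by (rule integrable_spike) auto
    then show "(\<lambda>x. if x \<in> A then F0 x else 0) integrable_on B"
      using assms(1) by (simp add: integrable_restrict_Int Int_absorb2)
  qed (use assms F_le in \<open>auto simp: F0_def\<close>)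
  finally show ?thesis .
next
  case False
  then show ?thesis
    using assms by (simp add: not_integrable_integral integral_nonneg)
qed

lemma AE_lebesgue_imp_ex:
  assumes "AE x in lebesgue. P (x :: 'a::euclidean_space)"
  shows "\<exists>x. P x"
proof -
  obtain N where P: "\<And>x. x \<in> space lebesgue - N \<Longrightarrow> P x" and "N \<in> null_sets lebesgue"
    using AE_E3[OF assms] by blast
  then have "N \<noteq> UNIV"
    by (auto simp: emeasure_completion)
  then show ?thesis
    using P by auto
qed

lemma norm_trilin_le_integral:
  fixes f g h :: "real \<Rightarrow> complex"
  assumes "D4 \<tau> \<xi> \<subseteq> cbox a b" "0 \<le> Mf" "0 \<le> Mg" "0 \<le> Mh"
    and "negligible Nf" "\<And>x. x \<notin> Nf \<Longrightarrow> norm (f x) \<le> Mf"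
    and "negligible Ng" "\<And>x. x \<notin> Ng \<Longrightarrow> norm (g x) \<le> Mg"
    and "negligible Nh" "\<And>x. x \<notin> Nh \<Longrightarrow> japanese x powr \<nu> * norm (h x) \<le> Mh"
  shows "norm (trilin t \<tau> f g h \<xi>)
           \<le> integral (cbox a b) (\<lambda>p. Mf * Mg * Mh * japanese (\<xi> - fst p - snd p) powr (-\<nu>))"
  unfolding trilin_def
proof (rule integral_norm_bound_integral_negligible)
  show "negligible (Nf \<times> UNIV \<union> UNIV \<times> Ng \<union> {p. \<xi> - fst p - snd p \<in> Nh})"
    using assms by (intro negligible_Un negligible_Times negligible_preimage_diff_fst_snd) auto
  show "(\<lambda>p. Mf * Mg * Mh * japanese (\<xi> - fst p - snd p) powr (-\<nu>)) integrable_on cbox a b"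
    by (intro integrable_continuous continuous_intros) auto
  have h_le: "norm (h u) \<le> Mh * japanese u powr (-\<nu>)" if "u \<notin> Nh" for u
  proof -
    have "norm (h u) = japanese u powr (-\<nu>) * (japanese u powr \<nu> * norm (h u))"
      by (simp add: mult.assoc[symmetric] powr_add[symmetric])
    also have "\<dots> \<le> Mh * japanese u powr (-\<nu>)"
      using assms that by (simp add: mult_left_mono mult.commute)
    finally show ?thesis .
  qed
  fix p assume p: "p \<in> D4 \<tau> \<xi> - (Nf \<times> UNIV \<union> UNIV \<times> Ng \<union> {p. \<xi> - fst p - snd p \<in> Nh})"
  obtain x y where [simp]: "p = (x, y)" by fastforce
  have "norm (case p of (x, y) \<Rightarrow> cis (t * Phi \<xi> x y) * f x * g y * h (\<xi> - x - y))
      = norm (f x) * norm (g y) * norm (h (\<xi> - x - y))"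
    by (simp add: norm_mult)
  also have "\<dots> \<le> Mf * Mg * (Mh * japanese (\<xi> - x - y) powr (-\<nu>))"
    using p assms h_le by (intro mult_mono) auto
  finally show "norm (case p of (x, y) \<Rightarrow> cis (t * Phi \<xi> x y) * f x * g y * h (\<xi> - x - y))
      \<le> Mf * Mg * Mh * japanese (\<xi> - fst p - snd p) powr (-\<nu>)"
    by (simp add: mult.assoc)
qed (use assms in auto)

lemma mem_D4_bounds:
  assumes "(x, y) \<in> D4 \<tau> \<xi>"
  shows "\<bar>x\<bar> < \<tau> powr (-1/3)" "\<bar>y\<bar> < \<tau> powr (-1/3)" "\<bar>\<xi>\<bar> < \<tau> powr (-1/3)"
  using assms unfolding D4_def by auto

lemma D4_eq_empty:
  assumes "\<tau> powr (-1/3) \<le> \<bar>\<xi>\<bar>"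
  shows "D4 \<tau> \<xi> = {}"
  using assms mem_D4_bounds(3) by fastforce

lemma D4_subset_cbox:
  assumes "\<tau> powr (-1/3) \<le> N"
  shows "D4 \<tau> \<xi> \<subseteq> cbox (-N, -N) (N, N)"
proof
  fix p assume "p \<in> D4 \<tau> \<xi>"
  moreover obtain x y where "p = (x, y)" by fastforce
  ultimately show "p \<in> cbox (-N, -N) (N, N)"
    using assms mem_D4_bounds(1,2)[of x y \<tau> \<xi>] by (auto simp: abs_less_iff)
qed

lemma norm_trilin_le_powr:
  fixes f g h :: "real \<Rightarrow> complex"
  assumes "0 \<le> \<nu>" "\<nu> < 1" "0 < \<tau>" "\<tau> powr (-1/3) \<le> N" "\<bar>\<xi>\<bar> \<le> N"
    and "0 \<le> Mf" "0 \<le> Mg" "0 \<le> Mh"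
    and "negligible Nf" "\<And>x. x \<notin> Nf \<Longrightarrow> norm (f x) \<le> Mf"
    and "negligible Ng" "\<And>x. x \<notin> Ng \<Longrightarrow> norm (g x) \<le> Mg"
    and "negligible Nh" "\<And>x. x \<notin> Nh \<Longrightarrow> japanese x powr \<nu> * norm (h x) \<le> Mh"
  shows "norm (trilin t \<tau> f g h \<xi>) \<le> 4 * 3 powr (1 - \<nu>) / (1 - \<nu>) * Mf * Mg * Mh * N powr (2 - \<nu>)"
proof -
  have "0 < N"
    using assms(3,4) powr_gt_zero[of \<tau> "-1/3"] by linarith
  have "norm (trilin t \<tau> f g h \<xi>)
      \<le> Mf * Mg * Mh * integral (cbox (-N, -N) (N, N)) (\<lambda>p. japanese (\<xi> - fst p - snd p) powr (-\<nu>))"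
    using norm_trilin_le_integral[OF D4_subset_cbox] assms by simp
  also have "\<dots> \<le> Mf * Mg * Mh * (4 * 3 powr (1 - \<nu>) / (1 - \<nu>) * N powr (2 - \<nu>))"
    using \<open>0 < N\<close> assms by (intro mult_left_mono integral_square_japanese_powr_le) auto
  finally show ?thesis
    by (simp add: mult_ac)
qed

lemma weighted_norm_trilin_le:
  fixes f g h :: "real \<Rightarrow> complex"
  assumes "0 \<le> \<mu>" "0 \<le> \<nu>" "\<nu> < 1" "0 < \<tau>" "\<tau> \<le> 1" "0 \<le> Mf" "0 \<le> Mg" "0 \<le> Mh"
    and "negligible Nf" "\<And>x. x \<notin> Nf \<Longrightarrow> norm (f x) \<le> Mf"
    and "negligible Ng" "\<And>x. x \<notin> Ng \<Longrightarrow> norm (g x) \<le> Mg"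
    and "negligible Nh" "\<And>x. x \<notin> Nh \<Longrightarrow> japanese x powr \<nu> * norm (h x) \<le> Mh"
  shows "japanese \<xi> powr \<mu> * norm (complex_of_real \<xi> * trilin t \<tau> f g h \<xi>)
           \<le> 4 * 2 powr \<mu> * 3 powr (1 - \<nu>) / (1 - \<nu>) * \<tau> powr (-1 + (\<nu> - \<mu>) / 3) * Mf * Mg * Mh"
proof (cases "\<tau> powr (-1/3) \<le> \<bar>\<xi>\<bar>")
  case True
  then show ?thesis
    using assms by (simp add: trilin_def D4_eq_empty)
next
  case False
  define N where "N = \<tau> powr (-1/3)"
  define K where "K = 4 * 3 powr (1 - \<nu>) / (1 - \<nu>) * Mf * Mg * Mh"
  have "\<bar>\<xi>\<bar> < N" "1 \<le> N"
    unfolding N_def using False assms(4,5) by (simp_all add: powr_minus_divide powr_le1)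
  have "0 \<le> K"
    unfolding K_def using assms by simp
  have trilin_le: "norm (trilin t \<tau> f g h \<xi>) \<le> K * N powr (2 - \<nu>)"
    unfolding K_def N_def using assms False
    by (intro norm_trilin_le_powr[where Nf = Nf and Ng = Ng and Nh = Nh]) auto
  have "japanese \<xi> powr \<mu> \<le> (2 * N) powr \<mu>"
    using japanese_le[of \<xi>] less_imp_le[OF japanese_pos, of \<xi>] \<open>\<bar>\<xi>\<bar> < N\<close> \<open>1 \<le> N\<close> assms(1)
    by (intro powr_mono2) auto
  then have japanese_le: "japanese \<xi> powr \<mu> \<le> 2 powr \<mu> * N powr \<mu>"
    using \<open>1 \<le> N\<close> by (simp add: powr_mult)
  have "japanese \<xi> powr \<mu> * norm (complex_of_real \<xi> * trilin t \<tau> f g h \<xi>)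
      = japanese \<xi> powr \<mu> * (\<bar>\<xi>\<bar> * norm (trilin t \<tau> f g h \<xi>))"
    by (simp add: norm_mult)
  also have "\<dots> \<le> (2 powr \<mu> * N powr \<mu>) * (N * (K * N powr (2 - \<nu>)))"
    using japanese_le \<open>\<bar>\<xi>\<bar> < N\<close> trilin_le \<open>0 \<le> K\<close> by (intro mult_mono) auto
  also have "\<dots> = 2 powr \<mu> * K * (N powr \<mu> * N powr 1 * N powr (2 - \<nu>))"
    using \<open>1 \<le> N\<close> by (simp add: mult_ac)
  also have "\<dots> = 2 powr \<mu> * K * N powr (\<mu> + 1 + (2 - \<nu>))"
    by (simp only: powr_add)
  also have "\<dots> = 2 powr \<mu> * K * \<tau> powr (-1/3 * (\<mu> + 1 + (2 - \<nu>)))"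
    unfolding N_def powr_powr ..
  also have "-1/3 * (\<mu> + 1 + (2 - \<nu>)) = -1 + (\<nu> - \<mu>) / 3"
    by (simp add: field_simps)
  finally show ?thesis
    unfolding K_def by (simp add: mult_ac)
qed

theorem lemma3p3:
  fixes \<mu> \<nu> :: real
  assumes "0 < \<mu>" "\<mu> < \<nu>" "\<nu> < 1/2"
  shows "\<exists>C>0. \<forall>t \<tau> (f :: real \<Rightarrow> complex) (g :: real \<Rightarrow> complex) (h :: real \<Rightarrow> complex) Mf Mg Mh.
           0 < t \<and> t < 1 \<and> 0 < \<tau> \<and> \<tau> < 1 \<and>
           f \<in> borel_measurable lebesgue \<and> g \<in> borel_measurable lebesgue \<and>
           h \<in> borel_measurable lebesgue \<and>
           (AE x in lebesgue. norm (f x) \<le> Mf) \<and>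
           (AE x in lebesgue. norm (g x) \<le> Mg) \<and>
           (AE x in lebesgue. japanese x powr \<nu> * norm (h x) \<le> Mh)
           \<longrightarrow> (AE \<xi> in lebesgue.
                 japanese \<xi> powr \<mu> * norm (complex_of_real \<xi> * trilin t \<tau> f g h \<xi>)
                   \<le> C * \<tau> powr (-1 + (\<nu> - \<mu>) / 3) * Mf * Mg * Mh)"
proof -
  define C where "C = 4 * 2 powr \<mu> * 3 powr (1 - \<nu>) / (1 - \<nu>)"
  have "AE \<xi> in lebesgue. japanese \<xi> powr \<mu> * norm (complex_of_real \<xi> * trilin t \<tau> f g h \<xi>)
          \<le> C * \<tau> powr (-1 + (\<nu> - \<mu>) / 3) * Mf * Mg * Mh"
    if "0 < \<tau>" "\<tau> < 1"
      and f: "AE x in lebesgue. norm (f x) \<le> Mf"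
      and g: "AE x in lebesgue. norm (g x) \<le> Mg"
      and h: "AE x in lebesgue. japanese x powr \<nu> * norm (h x) \<le> Mh"
    for t \<tau> Mf Mg Mh :: real and f g h :: "real \<Rightarrow> complex"
  proof -
    obtain Nf where "negligible Nf" "{x. \<not> norm (f x) \<le> Mf} \<subseteq> Nf"
      using f unfolding eventually_ae_filter_negligible by blast
    moreover obtain Ng where "negligible Ng" "{x. \<not> norm (g x) \<le> Mg} \<subseteq> Ng"
      using g unfolding eventually_ae_filter_negligible by blast
    moreover obtain Nh where "negligible Nh" "{x. \<not> japanese x powr \<nu> * norm (h x) \<le> Mh} \<subseteq> Nh"
      using h unfolding eventually_ae_filter_negligible by blast
    moreover have "0 \<le> Mf" "0 \<le> Mg" "0 \<le> Mh"
      using AE_lebesgue_imp_ex[OF f] AE_lebesgue_imp_ex[OF g] AE_lebesgue_imp_ex[OF h]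
      by (meson mult_nonneg_nonneg norm_ge_zero powr_ge_zero order_trans)+
    ultimately show ?thesis
      unfolding C_def using assms that(1,2)
      by (intro AE_I2 weighted_norm_trilin_le[where Nf = Nf and Ng = Ng and Nh = Nh]) auto
  qed
  moreover have "0 < C"
    unfolding C_def using assms by simp
  ultimately show ?thesis
    by blast
qed

end
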